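(* The following two statements are equivalent: (1) For all $n\ge1$, every infinite sequence of positive integers $x_1<x_2<\cdots$ with $x_{i+1}-x_i\le n$ for all $i$ contains a double 3-term arithmetic progression. (2) For all $n\ge1$ and all $m\in\mathbb{N}$, every infinite sequence of positive integers $x_1<x_2<\cdots$ with $x_{i+1}-x_i\le n$ for all $i$ contains a double 3-term arithmetic progression $x_i,x_j,x_k$ (with $i<j<k$) such that $j-i=k-j\ge m$.
   Context: An increasing sequence of positive integers $x_1<x_2<\cdots$ contains a double 3-term arithmetic progression $x_i,x_j,x_k$ if $i<j<k$, $i+k=2j$ and $x_i+x_k=2x_j$. *)

theory Defs
  imports Main
begin

text \<open>Sequences x_1 < x_2 < ... are represented as functions nat => nat indexed from 0
  (index shift is immaterial since only index differences matter).\<close>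

definition bounded_gap_seq :: "nat \<Rightarrow> (nat \<Rightarrow> nat) \<Rightarrow> bool" where
  "bounded_gap_seq n x \<longleftrightarrow> (\<forall>i. 0 < x i) \<and> strict_mono x \<and> (\<forall>i. x (Suc i) - x i \<le> n)"

definition double_3AP :: "(nat \<Rightarrow> nat) \<Rightarrow> nat \<Rightarrow> nat \<Rightarrow> nat \<Rightarrow> bool" where
  "double_3AP x i j k \<longleftrightarrow> i < j \<and> j < k \<and> i + k = 2 * j \<and> x i + x k = 2 * x j"

definition has_double_3AP :: "(nat \<Rightarrow> nat) \<Rightarrow> bool" where
  "has_double_3AP x \<longleftrightarrow> (\<exists>i j k. double_3AP x i j k)"

end

theory Submission
  imports Defs
begin

text \<open>(2) trivially implies (1). Conversely, given a gap bound n and a spacing m,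
  apply (1) to the subsequence i \<mapsto> x ((m+1) i), whose gaps are at most (m+1) n: a double
  3-term progression at indices i < j < k of the subsequence is one of x at the indices
  (m+1) i < (m+1) j < (m+1) k, whose index difference is at least m+1.\<close>

lemma bounded_gap_seq_diff_le:
  assumes "bounded_gap_seq n x"
  shows "x (a + d) - x a \<le> d * n"
proof (induction d)
  case 0
  then show ?case by simp
next
  case (Suc d)
  have "strict_mono x" and gap: "x (Suc (a + d)) - x (a + d) \<le> n"
    using assms by (simp_all add: bounded_gap_seq_def)
  then have "x a \<le> x (a + d)" "x (a + d) < x (Suc (a + d))"
    by (simp_all add: strict_mono_less_eq strict_mono_less)
  with Suc.IH gap show ?case by simp
qed

lemma bounded_gap_seq_subsample:
  assumes "bounded_gap_seq n x" and "0 < M"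
  shows "bounded_gap_seq (M * n) (\<lambda>i. x (M * i))"
proof -
  have "strict_mono x" using assms(1) by (simp add: bounded_gap_seq_def)
  then have "strict_mono (\<lambda>i. x (M * i))"
    using assms(2) by (simp add: strict_mono_def strict_mono_less)
  moreover have "x (M * Suc i) - x (M * i) \<le> M * n" for i
    using bounded_gap_seq_diff_le[OF assms(1), of "M * i" M] by (simp add: add.commute)
  ultimately show ?thesis using assms(1) by (simp add: bounded_gap_seq_def)
qed

lemma double_3AP_subsample:
  assumes "double_3AP (\<lambda>i. x (M * i)) i j k" and "0 < M"
  shows "double_3AP x (M * i) (M * j) (M * k)"
proof -
  have "i + k = 2 * j" using assms(1) by (simp add: double_3AP_def)
  then have "M * i + M * k = 2 * (M * j)"
    by (metis add_mult_distrib2 mult.left_commute)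
  with assms show ?thesis by (simp add: double_3AP_def)
qed

lemma double_3AP_subsample_spacing:
  assumes "double_3AP (\<lambda>i. x (M * i)) i j k"
  shows "M \<le> M * j - M * i"
proof -
  have "i < j" using assms by (simp add: double_3AP_def)
  then have "M \<le> M * (j - i)" by (simp add: Suc_leI)
  then show ?thesis by (simp add: diff_mult_distrib2)
qed

theorem theorem5:
  shows "(\<forall>n\<ge>1. \<forall>x. bounded_gap_seq n x \<longrightarrow> has_double_3AP x)
     \<longleftrightarrow> (\<forall>n\<ge>1. \<forall>m::nat. \<forall>x. bounded_gap_seq n x \<longrightarrow>
            (\<exists>i j k. double_3AP x i j k \<and> j - i \<ge> m))"
proof
  assume H: "\<forall>n\<ge>1. \<forall>x. bounded_gap_seq n x \<longrightarrow> has_double_3AP x"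
  show "\<forall>n\<ge>1. \<forall>m::nat. \<forall>x. bounded_gap_seq n x \<longrightarrow>
            (\<exists>i j k. double_3AP x i j k \<and> j - i \<ge> m)"
  proof (intro allI impI)
    fix n m x
    assume "n \<ge> 1" and x: "bounded_gap_seq n x"
    have "bounded_gap_seq (Suc m * n) (\<lambda>i. x (Suc m * i))" and "Suc m * n \<ge> 1"
      using bounded_gap_seq_subsample[OF x, of "Suc m"] \<open>n \<ge> 1\<close> by simp_all
    with H obtain i j k where ap: "double_3AP (\<lambda>i. x (Suc m * i)) i j k"
      unfolding has_double_3AP_def by blast
    have "double_3AP x (Suc m * i) (Suc m * j) (Suc m * k)"
      using double_3AP_subsample[OF ap] by simp
    moreover have "m \<le> Suc m * j - Suc m * i"
      using double_3AP_subsample_spacing[OF ap] by linarith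
    ultimately show "\<exists>i j k. double_3AP x i j k \<and> j - i \<ge> m" by blast
  qed
next
  assume "\<forall>n\<ge>1. \<forall>m::nat. \<forall>x. bounded_gap_seq n x \<longrightarrow>
            (\<exists>i j k. double_3AP x i j k \<and> j - i \<ge> m)"
  then show "\<forall>n\<ge>1. \<forall>x. bounded_gap_seq n x \<longrightarrow> has_double_3AP x"
    unfolding has_double_3AP_def by blast
qed

end
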